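(* Let $n\in\mathbb{N}$ and $m\geq 3$. Then \[ B_n(d_1,d_2,\dots, d_n)= n!\cdot e_{m+2,n}, \] where $d_j=-(j-1)!\cdot \sigma'_m(j)$ for $j\ge1$.
   Context: The complete exponential Bell polynomials $B_n(x_1,\dots,x_n)$ are defined by $\exp\big(\sum_{j\ge1}x_j\frac{t^j}{j!}\big)=\sum_{n\ge0}B_n(x_1,\dots,x_n)\frac{t^n}{n!}$. For $m\ge3$ and $j\in\mathbb{N}$, $\sigma'_m(j)$ is the sum of the positive divisors $d$ of $j$ with $d\equiv 0$, $1$ or $m-1 \pmod m$. For $g\ge5$ and $n\in\mathbb{N}_0$, $e_{g,n}=1$ if $n=0$, $e_{g,n}=(-1)^k$ if $n=P_{g,k}$ or $n=Q_{g,k}$ for some $k\in\mathbb{N}$ (where $P_{g,k}=\frac{k((g-2)k-(g-4))}{2}$, $Q_{g,k}=\frac{k((g-2)k+(g-4))}{2}$), and $e_{g,n}=0$ otherwise. *)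

theory Defs
  imports "HOL-Computational_Algebra.Formal_Power_Series"
begin

text \<open>Complete exponential Bell polynomial, defined through its generating function:
  exp(\<Sum>j\<ge>1 x_j t^j/j!) = \<Sum>n B_n(x) t^n/n!.  The exponential of a power series with
  zero constant term is the composition of the exponential series with it.\<close>
definition bell_complete :: "nat \<Rightarrow> (nat \<Rightarrow> real) \<Rightarrow> real" where
  "bell_complete n x =
     fact n * fps_nth (fps_exp 1 oo Abs_fps (\<lambda>j. if j = 0 then 0 else x j / fact j)) n"

definition sigma' :: "nat \<Rightarrow> nat \<Rightarrow> nat" where
  "sigma' m j = (\<Sum>d \<in> {d. d dvd j \<and> (d mod m = 0 \<or> d mod m = 1 \<or> d mod m = m - 1)}. d)"

definition Pg :: "nat \<Rightarrow> nat \<Rightarrow> nat" where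
  "Pg g k = k * ((g - 2) * k - (g - 4)) div 2"

definition Qg :: "nat \<Rightarrow> nat \<Rightarrow> nat" where
  "Qg g k = k * ((g - 2) * k + (g - 4)) div 2"

definition e_coef :: "nat \<Rightarrow> nat \<Rightarrow> int" where
  "e_coef g n =
     (if n = 0 then 1
      else if \<exists>k\<ge>1. n = Pg g k \<or> n = Qg g k
      then (-1) ^ (SOME k. k \<ge> 1 \<and> (n = Pg g k \<or> n = Qg g k))
      else 0)"

end

theory Submission
  imports Defs
begin

text \<open>
  The series \<open>exp (- \<Sum>\<^sub>j \<sigma>'_m(j) t^j / j)\<close>, whose \<open>n\<close>-th coefficient is
  \<open>B_n(d_1, ..., d_n) / n!\<close>, and the product \<open>\<Prod> (1 - t^d)\<close> over all \<open>d \<equiv> 0, \<plusminus>1 (mod m)\<close>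
  both solve \<open>t F' = - (\<Sum>\<^sub>j \<sigma>'_m(j) t^j) F\<close> with \<open>F(0) = 1\<close>, because the logarithmic
  derivative of the product collects exactly the divisors counted by \<open>\<sigma>'_m\<close>; so they are
  equal. Jacobi's triple product with \<open>q = t^m\<close> and \<open>z = -t\<close> turns the product into
  \<open>\<Sum>\<^sub>k (-1)^k t^(m k (k - 1) / 2 + k)\<close>. Its exponents are the generalised \<open>(m+2)\<close>-gonal
  numbers \<open>P_{m+2,k}\<close> and \<open>Q_{m+2,k}\<close>, which are pairwise distinct for \<open>m \<ge> 3\<close>, so the
  coefficients are the \<open>e_{m+2,n}\<close>.

  Only coefficients up to \<open>t^n\<close> matter. So the product is truncated to finitely many factors,
  and the triple product is used in Cauchy's finite form
  \<open>\<Prod>_{i<n} (1 + z q^i) (1 + q^(i+1) / z) = \<Sum>_{|k|\<le>n} z^k q^(k (k - 1) / 2) [2n, n+k]_q\<close>,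
  which follows by induction on \<open>n\<close> from the Pascal recurrences of the Gaussian binomial
  coefficients. Modulo \<open>t^(N+1)\<close> the factor \<open>(q; q)_n [2n, n+k]_q\<close> is \<open>1\<close> when
  \<open>n \<plusminus> k \<ge> N\<close>, and the terms with larger \<open>|k|\<close> vanish.
\<close>

unbundle fps_syntax

section \<open>Truncated power series\<close>

lemma fps_cutoff_mult_cong:
  fixes f f' g g' :: "'a::comm_semiring_0 fps"
  assumes "fps_cutoff n f = fps_cutoff n f'" and "fps_cutoff n g = fps_cutoff n g'"
  shows "fps_cutoff n (f * g) = fps_cutoff n (f' * g')"
  using assms unfolding fps_cutoff_eq_fps_cutoff_iff by (auto simp: fps_mult_nth intro!: sum.cong)

lemma fps_cutoff_sum_cong:
  fixes f g :: "'b \<Rightarrow> 'a::comm_monoid_add fps"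
  assumes "\<And>k. k \<in> S \<Longrightarrow> fps_cutoff n (f k) = fps_cutoff n (g k)"
  shows "fps_cutoff n (sum f S) = fps_cutoff n (sum g S)"
  using assms unfolding fps_cutoff_eq_fps_cutoff_iff by (simp add: fps_sum_nth)

lemma fps_cutoff_mult_right_cancel:
  fixes f g h :: "'a::field fps"
  assumes "fps_cutoff n (f * h) = fps_cutoff n (g * h)" and "h $ 0 \<noteq> 0"
  shows "fps_cutoff n f = fps_cutoff n g"
  using fps_cutoff_mult_cong[OF assms(1) refl, of "inverse h"] inverse_mult_eq_1'[OF assms(2)]
  by (simp add: mult.assoc)

lemma fps_cutoff_X_power_mult: "n \<le> e \<Longrightarrow> fps_cutoff n (fps_X ^ e * f) = 0"
  by (simp add: fps_eq_iff fps_X_power_mult_nth)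

section \<open>Gaussian binomial coefficients\<close>

definition q_pochhammer :: "'a::comm_ring_1 \<Rightarrow> nat \<Rightarrow> 'a" where
  "q_pochhammer q n = (\<Prod>i<n. 1 - q ^ Suc i)"

lemma q_pochhammer_0 [simp]: "q_pochhammer q 0 = 1"
  by (simp add: q_pochhammer_def)

lemma q_pochhammer_Suc: "q_pochhammer q (Suc n) = q_pochhammer q n * (1 - q ^ Suc n)"
  by (simp add: q_pochhammer_def)

text \<open>\<open>gauss_binomial q a b\<close> is the Gaussian binomial coefficient \<open>[a + b, a]_q\<close>.\<close>
fun gauss_binomial :: "'a::comm_ring_1 \<Rightarrow> nat \<Rightarrow> nat \<Rightarrow> 'a" where
  "gauss_binomial q 0 b = 1"
| "gauss_binomial q (Suc a) 0 = 1"
| "gauss_binomial q (Suc a) (Suc b) =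
     gauss_binomial q a (Suc b) + q ^ Suc a * gauss_binomial q (Suc a) b"

lemma gauss_binomial_0_right [simp]: "gauss_binomial q a 0 = 1"
  by (cases a) auto

lemma gauss_binomial_q_pochhammer:
  "gauss_binomial q a b * q_pochhammer q a * q_pochhammer q b = q_pochhammer q (a + b)"
proof (induction q a b rule: gauss_binomial.induct)
  case (3 q a b)
  have "gauss_binomial q (Suc a) (Suc b) * q_pochhammer q (Suc a) * q_pochhammer q (Suc b)
      = (gauss_binomial q a (Suc b) * q_pochhammer q a * q_pochhammer q (Suc b)) * (1 - q ^ Suc a)
        + q ^ Suc a * (gauss_binomial q (Suc a) b * q_pochhammer q (Suc a) * q_pochhammer q b)
          * (1 - q ^ Suc b)"
    by (simp add: q_pochhammer_Suc algebra_simps)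
  also have "\<dots> = q_pochhammer q (Suc (a + b)) * (1 - q ^ Suc a)
      + q ^ Suc a * q_pochhammer q (Suc (a + b)) * (1 - q ^ Suc b)"
    using 3 by simp
  also have "\<dots> = q_pochhammer q (Suc (a + b)) * (1 - q ^ Suc a * q ^ Suc b)"
    by (simp add: algebra_simps)
  also have "q ^ Suc a * q ^ Suc b = q ^ Suc (Suc (a + b))"
    by (metis add_Suc add_Suc_right power_add)
  also have "q_pochhammer q (Suc (a + b)) * (1 - q ^ Suc (Suc (a + b)))
      = q_pochhammer q (Suc a + Suc b)"
    by (simp only: add_Suc add_Suc_right q_pochhammer_Suc[of q "Suc (a + b)"])
  finally show ?case .
qed simp_all

lemma gauss_binomial_sym:
  fixes q :: "'a::idom"
  assumes "q_pochhammer q (a + b) \<noteq> 0"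
  shows "gauss_binomial q a b = gauss_binomial q b a"
proof -
  have ab: "gauss_binomial q a b * (q_pochhammer q a * q_pochhammer q b) = q_pochhammer q (a + b)"
    using gauss_binomial_q_pochhammer[of q a b] by (simp only: mult.assoc)
  have ba: "gauss_binomial q b a * (q_pochhammer q a * q_pochhammer q b) = q_pochhammer q (a + b)"
    using gauss_binomial_q_pochhammer[of q b a] by (metis add.commute mult.assoc mult.commute)
  have "q_pochhammer q a * q_pochhammer q b \<noteq> 0"
    using ab assms by auto
  with ab ba show ?thesis by (metis mult_right_cancel)
qed

definition gauss_binomial_int :: "'a::comm_ring_1 \<Rightarrow> int \<Rightarrow> int \<Rightarrow> 'a" where
  "gauss_binomial_int q a b = (if a < 0 \<or> b < 0 then 0 else gauss_binomial q (nat a) (nat b))"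

lemma gauss_binomial_int_neg: "a < 0 \<or> b < 0 \<Longrightarrow> gauss_binomial_int q a b = 0"
  by (simp add: gauss_binomial_int_def)

lemma gauss_binomial_int_pascal:
  assumes "a \<noteq> 0 \<or> b \<noteq> 0"
  shows "gauss_binomial_int q a b
           = gauss_binomial_int q (a - 1) b + q ^ nat a * gauss_binomial_int q a (b - 1)"
proof (cases "a \<le> 0 \<or> b \<le> 0")
  case True
  then show ?thesis using assms by (auto simp: gauss_binomial_int_def)
next
  case False
  then have "nat a = Suc (nat (a - 1))" and "nat b = Suc (nat (b - 1))"
    by auto
  with False show ?thesis
    by (simp add: gauss_binomial_int_def)
qed

lemma gauss_binomial_int_sym:
  fixes q :: "'a::idom"
  assumes "\<And>n. q_pochhammer q n \<noteq> 0"
  shows "gauss_binomial_int q a b = gauss_binomial_int q b a"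
  using gauss_binomial_sym[OF assms] by (auto simp: gauss_binomial_int_def)

lemma gauss_binomial_int_pascal':
  fixes q :: "'a::idom"
  assumes "a \<noteq> 0 \<or> b \<noteq> 0" and "\<And>n. q_pochhammer q n \<noteq> 0"
  shows "gauss_binomial_int q a b
           = q ^ nat b * gauss_binomial_int q (a - 1) b + gauss_binomial_int q a (b - 1)"
  using gauss_binomial_int_pascal[of b a q] assms gauss_binomial_int_sym[OF assms(2)]
  by (auto simp: add.commute)

lemma gauss_binomial_int_pascal_twice:
  fixes q :: "'a::idom"
  assumes "a + b \<ge> 2" and "\<And>n. q_pochhammer q n \<noteq> 0"
  shows "gauss_binomial_int q a b
           = (1 + q ^ nat (a + b - 1)) * gauss_binomial_int q (a - 1) (b - 1)
             + q ^ nat b * gauss_binomial_int q (a - 2) b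
             + q ^ nat a * gauss_binomial_int q a (b - 2)"
proof -
  let ?G = "gauss_binomial_int q"
  have ab: "?G a b = q ^ nat b * ?G (a - 1) b + ?G a (b - 1)"
    using gauss_binomial_int_pascal'[OF _ assms(2)] assms(1) by force
  have a1: "?G (a - 1) b = ?G (a - 2) b + q ^ nat (a - 1) * ?G (a - 1) (b - 1)"
    using gauss_binomial_int_pascal[of "a - 1" b q] assms(1) by simp
  have b1: "?G a (b - 1) = ?G (a - 1) (b - 1) + q ^ nat a * ?G a (b - 2)"
    using gauss_binomial_int_pascal[of a "b - 1" q] assms(1) by simp
  have powers: "q ^ nat b * (q ^ nat (a - 1) * ?G (a - 1) (b - 1))
           = q ^ nat (a + b - 1) * ?G (a - 1) (b - 1)"
  proof (cases "a \<ge> 1 \<and> b \<ge> 1")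
    case True
    then have "nat b + nat (a - 1) = nat (a + b - 1)" by auto
    then show ?thesis by (simp add: power_add[symmetric] mult.assoc[symmetric])
  next
    case False
    then show ?thesis by (auto simp: gauss_binomial_int_neg)
  qed
  show ?thesis
    unfolding ab a1 b1 using powers by (simp add: algebra_simps)
qed

lemma q_pochhammer_nth_0:
  assumes "q $ 0 = 0"
  shows "q_pochhammer q n $ 0 = 1"
  by (induction n) (simp_all add: q_pochhammer_Suc assms startsby_zero_power)

lemma q_pochhammer_X_power_nonzero:
  assumes "0 < m"
  shows "q_pochhammer (fps_X ^ m :: 'a::idom fps) n \<noteq> 0"
proof -
  have "q_pochhammer (fps_X ^ m :: 'a fps) n $ 0 = 1"
    using assms by (intro q_pochhammer_nth_0) simp
  then show ?thesis
    by auto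
qed

lemma gauss_binomial_int_X_power_Suc:
  assumes "0 < m"
  shows "gauss_binomial_int (fps_X ^ m :: 'a::idom fps) (int (Suc n) + k) (int (Suc n) - k)
     = (1 + fps_X ^ (2 * m * n + m)) * gauss_binomial_int (fps_X ^ m) (int n + k) (int n - k)
       + fps_X ^ (m * nat (int n + 1 - k))
         * gauss_binomial_int (fps_X ^ m) (int n + (k - 1)) (int n - (k - 1))
       + fps_X ^ (m * nat (int n + 1 + k))
         * gauss_binomial_int (fps_X ^ m) (int n + (k + 1)) (int n - (k + 1))"
proof -
  let ?q = "fps_X ^ m :: 'a fps"
  let ?G = "\<lambda>k. gauss_binomial_int ?q (int n + k) (int n - k)"
  have "gauss_binomial_int ?q (int (Suc n) + k) (int (Suc n) - k)
     = (1 + ?q ^ nat (2 * int n + 1)) * ?G k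
       + ?q ^ nat (int n + 1 - k) * ?G (k - 1) + ?q ^ nat (int n + 1 + k) * ?G (k + 1)"
    using gauss_binomial_int_pascal_twice[OF _ q_pochhammer_X_power_nonzero[OF assms],
        of "int (Suc n) + k" "int (Suc n) - k"]
    by (simp add: algebra_simps)
  moreover have "m * nat (2 * int n + 1) = 2 * m * n + m"
    by (simp add: nat_add_distrib nat_mult_distrib algebra_simps)
  ultimately show ?thesis
    by (simp only: power_mult[symmetric])
qed

lemma fps_cutoff_q_pochhammer:
  assumes "q $ 0 = 0" and "N \<le> a"
  shows "fps_cutoff (Suc N) (q_pochhammer q a) = fps_cutoff (Suc N) (q_pochhammer q N)"
  using assms(2)
proof (induction a rule: dec_induct)
  case (step a)
  have "fps_cutoff (Suc N) (1 - q ^ Suc a) = fps_cutoff (Suc N) 1"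
    using step(1) startsby_zero_power_prefix[OF assms(1), of "Suc a"]
    by (simp add: fps_cutoff_eq_fps_cutoff_iff)
  from fps_cutoff_mult_cong[OF step.IH this] show ?case
    by (simp add: q_pochhammer_Suc)
qed simp

lemma fps_cutoff_q_pochhammer_gauss_binomial:
  fixes q :: "'a::field fps"
  assumes "q $ 0 = 0" and "N \<le> a" and "N \<le> b"
  shows "fps_cutoff (Suc N) (q_pochhammer q N * gauss_binomial q a b) = fps_cutoff (Suc N) 1"
proof (rule fps_cutoff_mult_right_cancel)
  let ?P = "q_pochhammer q"
  let ?G = "gauss_binomial q a b"
  have "fps_cutoff (Suc N) (?P N * ?G * ?P N) = fps_cutoff (Suc N) (?G * ?P N * ?P N)"
    by (simp only: mult.commute[of "?P N" ?G])
  also have "\<dots> = fps_cutoff (Suc N) (?G * ?P a * ?P b)"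
    using assms by (intro fps_cutoff_mult_cong refl fps_cutoff_q_pochhammer[symmetric])
  also have "\<dots> = fps_cutoff (Suc N) (1 * ?P N)"
    using fps_cutoff_q_pochhammer[OF assms(1), of N "a + b"] assms(2)
    by (simp add: gauss_binomial_q_pochhammer)
  finally show "fps_cutoff (Suc N) (?P N * ?G * ?P N) = fps_cutoff (Suc N) (1 * ?P N)" .
  show "?P N $ 0 \<noteq> 0" by (simp add: q_pochhammer_nth_0 assms(1))
qed

section \<open>Generalised polygonal numbers\<close>

definition gen_polygonal :: "nat \<Rightarrow> int \<Rightarrow> nat" where
  "gen_polygonal m k = nat (int m * (k * (k - 1) div 2) + k)"

lemma gen_polygonal_0 [simp]: "gen_polygonal m 0 = 0"
  by (simp add: gen_polygonal_def)

lemma gen_polygonal_double: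
  assumes "0 < m"
  shows "2 * int (gen_polygonal m k) = int m * k * (k - 1) + 2 * k"
proof -
  define t where "t = k * (k - 1) div 2"
  have double_t: "2 * t = k * (k - 1)"
    unfolding t_def by simp
  have "0 \<le> k * (k - 1)"
    by (cases "k \<ge> 1") (auto intro: mult_nonneg_nonneg mult_nonpos_nonpos)
  moreover have "0 \<le> k * (k + 1)"
    by (cases "k \<ge> 0") (auto intro: mult_nonneg_nonneg mult_nonpos_nonpos)
  moreover have "k * (k - 1) = k * (k + 1) - 2 * k"
    by (simp add: algebra_simps)
  ultimately have "0 \<le> t" and "- k \<le> t"
    using double_t by linarith+
  moreover have "t \<le> int m * t"
    using \<open>0 \<le> t\<close> assms by (simp add: mult_le_cancel_right1)
  ultimately have "0 \<le> int m * t + k"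
    by linarith
  then have "2 * int (gen_polygonal m k) = int m * (2 * t) + 2 * k"
    unfolding gen_polygonal_def t_def[symmetric] by (simp add: algebra_simps)
  then show ?thesis
    unfolding double_t by (simp add: mult.assoc)
qed

lemma gen_polygonal_pred:
  assumes "0 < m"
  shows "int (gen_polygonal m k) = int (gen_polygonal m (k - 1)) + int m * (k - 1) + 1"
  using gen_polygonal_double[OF assms, of k] gen_polygonal_double[OF assms, of "k - 1"]
  by (simp add: algebra_simps)

lemma gen_polygonal_add_pred:
  assumes "0 < m" and "k \<le> int n + 1"
  shows "gen_polygonal m k + m * nat (int n + 1 - k) = m * n + 1 + gen_polygonal m (k - 1)"
proof -
  have "int (gen_polygonal m k + m * nat (int n + 1 - k)) = int (m * n + 1 + gen_polygonal m (k - 1))"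
    using gen_polygonal_pred[OF assms(1), of k] assms(2) by (simp add: algebra_simps)
  then show ?thesis
    by (simp only: of_nat_eq_iff)
qed

lemma gen_polygonal_add_succ:
  assumes "0 < m" and "- int n - 1 \<le> k"
  shows "gen_polygonal m k + m * nat (int n + 1 + k) = m * n + m - 1 + gen_polygonal m (k + 1)"
proof -
  have "int (gen_polygonal m k + m * nat (int n + 1 + k)) = int (m * n + m - 1 + gen_polygonal m (k + 1))"
    using gen_polygonal_pred[OF assms(1), of "k + 1"] assms by (simp add: algebra_simps of_nat_diff)
  then show ?thesis
    by (simp only: of_nat_eq_iff)
qed

lemma abs_le_gen_polygonal:
  assumes "2 \<le> m"
  shows "\<bar>k\<bar> \<le> int (gen_polygonal m k)"
proof -
  have nonneg: "0 \<le> k * (k - 1)"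
    by (cases "k \<ge> 1") (auto intro: mult_nonneg_nonneg mult_nonpos_nonpos)
  then have "2 * (k * (k - 1)) \<le> int m * (k * (k - 1))"
    using assms by (intro mult_right_mono) simp_all
  moreover have "- k \<le> k * k" if "k < 0"
  proof -
    have "(- k) * 1 \<le> (- k) * (- k)"
      using that by (intro mult_left_mono) auto
    then show ?thesis by simp
  qed
  ultimately show ?thesis
    using nonneg gen_polygonal_double[of m k] assms by (auto simp: algebra_simps abs_if)
qed

lemma gen_polygonal_inj:
  assumes "3 \<le> m" and "gen_polygonal m a = gen_polygonal m b"
  shows "a = b"
proof -
  have "(a - b) * (int m * (a + b - 1) + 2) = 0"
    using gen_polygonal_double[of m a] gen_polygonal_double[of m b] assms
    by (simp add: algebra_simps)
  moreover have "int m * (a + b - 1) + 2 \<noteq> 0"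
  proof (cases "a + b - 1 \<ge> 0")
    case False
    then have "int m * (a + b - 1) \<le> int m * (-1)"
      by (intro mult_left_mono) auto
    then show ?thesis using assms by linarith
  next
    case True
    then have "0 \<le> int m * (a + b - 1)" by simp
    then show ?thesis by linarith
  qed
  ultimately show ?thesis by simp
qed

lemma Pg_eq_gen_polygonal:
  assumes "2 \<le> m"
  shows "Pg (m + 2) k = gen_polygonal m (int k)"
proof -
  have "m - 2 \<le> m * k" if "k \<noteq> 0"
  proof -
    have "m \<le> m * k" using that by (cases k) simp_all
    then show ?thesis by linarith
  qed
  then have "int (k * (m * k - (m - 2))) = int k * (int m * int k - int m + 2)"
    using assms by (cases "k = 0") (simp_all add: of_nat_diff)
  also have "\<dots> = 2 * int (gen_polygonal m (int k))"
    using assms gen_polygonal_double[of m "int k"] by (simp add: algebra_simps)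
  finally have "int (k * (m * k - (m - 2))) = int (2 * gen_polygonal m (int k))"
    by simp
  then have "k * (m * k - (m - 2)) = 2 * gen_polygonal m (int k)"
    by (simp only: of_nat_eq_iff)
  then show ?thesis
    unfolding Pg_def by simp
qed

lemma Qg_eq_gen_polygonal:
  assumes "2 \<le> m"
  shows "Qg (m + 2) k = gen_polygonal m (- int k)"
proof -
  have "int (k * (m * k + (m - 2))) = int k * (int m * int k + int m - 2)"
    using assms by (simp add: of_nat_diff)
  also have "\<dots> = 2 * int (gen_polygonal m (- int k))"
    using assms gen_polygonal_double[of m "- int k"] by (simp add: algebra_simps)
  finally have "int (k * (m * k + (m - 2))) = int (2 * gen_polygonal m (- int k))"
    by simp
  then have "k * (m * k + (m - 2)) = 2 * gen_polygonal m (- int k)"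
    by (simp only: of_nat_eq_iff)
  then show ?thesis
    unfolding Qg_def by simp
qed

lemma e_coef_conv_gen_polygonal:
  assumes "2 \<le> m"
  shows "e_coef (m + 2) N =
    (if N = 0 then 1
     else if \<exists>j\<ge>1. N = gen_polygonal m (int j) \<or> N = gen_polygonal m (- int j)
     then (-1) ^ (SOME j. j \<ge> 1 \<and> (N = gen_polygonal m (int j) \<or> N = gen_polygonal m (- int j)))
     else 0)"
  unfolding e_coef_def Pg_eq_gen_polygonal[OF assms] Qg_eq_gen_polygonal[OF assms] ..

lemma e_coef_gen_polygonal:
  assumes "3 \<le> m"
  shows "e_coef (m + 2) (gen_polygonal m k) = (-1) ^ nat \<bar>k\<bar>"
proof (cases "k = 0")
  case False
  have m2: "2 \<le> m"
    using assms by simp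
  let ?N = "gen_polygonal m k"
  let ?P = "\<lambda>j. j \<ge> 1 \<and> (?N = gen_polygonal m (int j) \<or> ?N = gen_polygonal m (- int j))"
  define j where "j = (SOME j. ?P j)"
  have "?P (nat \<bar>k\<bar>)"
    using False by (cases "k > 0") auto
  then have "?P j"
    unfolding j_def by (rule someI)
  then have "k = int j \<or> k = - int j"
    using gen_polygonal_inj[OF assms] by blast
  then have "nat \<bar>k\<bar> = j"
    by auto
  moreover have "?N \<noteq> 0"
    using abs_le_gen_polygonal[OF m2, of k] False by auto
  ultimately show ?thesis
    using \<open>?P (nat \<bar>k\<bar>)\<close> unfolding e_coef_conv_gen_polygonal[OF m2] j_def by auto
qed (simp add: e_coef_def)

lemma e_coef_not_gen_polygonal:
  assumes "3 \<le> m" and "N \<notin> range (gen_polygonal m)"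
  shows "e_coef (m + 2) N = 0"
proof -
  have "N \<noteq> 0"
    using assms(2) gen_polygonal_0 by (metis rangeI)
  moreover have "2 \<le> m"
    using assms(1) by simp
  ultimately show ?thesis
    using assms(2) unfolding e_coef_conv_gen_polygonal[OF \<open>2 \<le> m\<close>] by auto
qed

section \<open>A finite Jacobi triple product\<close>

lemma minus_one_power_nat_abs: "(-1) ^ nat \<bar>k\<bar> = (if even k then 1 else - 1 :: 'a::ring_1)"
  by (simp add: minus_one_power_iff even_nat_iff)

text \<open>Cauchy's finite form of the triple product, specialised to \<open>q = X^m\<close> and \<open>z = -X\<close>.\<close>
definition jacobi_term :: "nat \<Rightarrow> nat \<Rightarrow> int \<Rightarrow> 'a::idom fps" where
  "jacobi_term m n k = (-1) ^ nat \<bar>k\<bar> * fps_X ^ gen_polygonal m k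
                      * gauss_binomial_int (fps_X ^ m) (int n + k) (int n - k)"

definition jacobi_sum :: "nat \<Rightarrow> nat \<Rightarrow> 'a::idom fps" where
  "jacobi_sum m n = (\<Sum>k = - int n..int n. jacobi_term m n k)"

definition jacobi_prod :: "nat \<Rightarrow> nat \<Rightarrow> 'a::idom fps" where
  "jacobi_prod m n = (\<Prod>i<n. (1 - fps_X ^ (m * i + 1)) * (1 - fps_X ^ (m * i + m - 1)))"

lemma jacobi_term_eq_0:
  assumes "int n < \<bar>k\<bar>"
  shows "jacobi_term m n k = 0"
proof -
  have "int n + k < 0 \<or> int n - k < 0"
    using assms by arith
  then show ?thesis
    by (simp add: jacobi_term_def gauss_binomial_int_neg)
qed

lemma jacobi_term_Suc:
  assumes "0 < m"
  shows "jacobi_term m (Suc n) k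
           = (1 + fps_X ^ (2 * m * n + m)) * jacobi_term m n k
             - fps_X ^ (m * n + 1) * jacobi_term m n (k - 1)
             - fps_X ^ (m * n + m - 1) * jacobi_term m n (k + 1)"
proof -
  let ?X = "fps_X :: 'a fps"
  let ?G = "\<lambda>k. gauss_binomial_int (?X ^ m) (int n + k) (int n - k)"
  let ?s = "\<lambda>k. (-1) ^ nat \<bar>k\<bar> :: 'a fps"
  have s: "?s (k - 1) = - ?s k" "?s (k + 1) = - ?s k"
    by (simp_all add: minus_one_power_nat_abs)
  have pred_term: "?X ^ gen_polygonal m k * ?X ^ (m * nat (int n + 1 - k)) * ?G (k - 1)
      = ?X ^ (m * n + 1) * ?X ^ gen_polygonal m (k - 1) * ?G (k - 1)"
  proof (cases "k \<le> int n + 1")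
    case True
    then show ?thesis
      using gen_polygonal_add_pred[OF assms True] by (simp flip: power_add)
  qed (simp add: gauss_binomial_int_neg)
  have succ_term: "?X ^ gen_polygonal m k * ?X ^ (m * nat (int n + 1 + k)) * ?G (k + 1)
      = ?X ^ (m * n + m - 1) * ?X ^ gen_polygonal m (k + 1) * ?G (k + 1)"
  proof (cases "- int n - 1 \<le> k")
    case True
    then show ?thesis
      using gen_polygonal_add_succ[OF assms True] by (simp flip: power_add)
  qed (simp add: gauss_binomial_int_neg)
  have "jacobi_term m (Suc n) k
      = ?s k * (?X ^ gen_polygonal m k
          * gauss_binomial_int (?X ^ m) (int (Suc n) + k) (int (Suc n) - k))"
    by (simp add: jacobi_term_def mult.assoc)
  also have "\<dots> = ?s k * ((1 + ?X ^ (2 * m * n + m)) * (?X ^ gen_polygonal m k * ?G k))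
      + ?s k * (?X ^ gen_polygonal m k * ?X ^ (m * nat (int n + 1 - k)) * ?G (k - 1))
      + ?s k * (?X ^ gen_polygonal m k * ?X ^ (m * nat (int n + 1 + k)) * ?G (k + 1))"
    unfolding gauss_binomial_int_X_power_Suc[OF assms] by (simp add: algebra_simps)
  also have "\<dots> = (1 + ?X ^ (2 * m * n + m)) * jacobi_term m n k
      - ?X ^ (m * n + 1) * jacobi_term m n (k - 1) - ?X ^ (m * n + m - 1) * jacobi_term m n (k + 1)"
    unfolding pred_term succ_term jacobi_term_def s by (simp add: algebra_simps)
  finally show ?thesis .
qed

lemma sum_int_interval_shift:
  fixes f :: "int \<Rightarrow> 'a::comm_monoid_add"
  shows "(\<Sum>k = a..b. f (k + c)) = (\<Sum>k = a + c..b + c. f k)"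
  by (rule sum.reindex_bij_witness[of _ "\<lambda>k. k - c" "\<lambda>k. k + c"]) auto

lemma jacobi_sum_conv_wider_range:
  assumes "a \<le> - int n" and "int n \<le> b"
  shows "(\<Sum>k = a..b. jacobi_term m n k) = jacobi_sum m n"
  unfolding jacobi_sum_def using assms
  by (intro sum.mono_neutral_right) (auto intro!: jacobi_term_eq_0)

lemma jacobi_sum_Suc:
  assumes "0 < m"
  shows "jacobi_sum m (Suc n) = (1 - fps_X ^ (m * n + 1)) * (1 - fps_X ^ (m * n + m - 1)) * jacobi_sum m n"
proof -
  let ?X = "fps_X :: 'a fps"
  let ?I = "{- int (Suc n)..int (Suc n)}"
  have "jacobi_sum m (Suc n) = (\<Sum>k\<in>?I. (1 + ?X ^ (2 * m * n + m)) * jacobi_term m n k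
      - ?X ^ (m * n + 1) * jacobi_term m n (k + -1) - ?X ^ (m * n + m - 1) * jacobi_term m n (k + 1))"
    unfolding jacobi_sum_def jacobi_term_Suc[OF assms] by simp
  also have "\<dots> = (1 + ?X ^ (2 * m * n + m)) * (\<Sum>k\<in>?I. jacobi_term m n k)
      - ?X ^ (m * n + 1) * (\<Sum>k\<in>?I. jacobi_term m n (k + -1))
      - ?X ^ (m * n + m - 1) * (\<Sum>k\<in>?I. jacobi_term m n (k + 1))"
    by (simp add: sum_subtractf sum_distrib_left)
  also have "\<dots> = (1 + ?X ^ (m * n + 1) * ?X ^ (m * n + m - 1) - ?X ^ (m * n + 1)
      - ?X ^ (m * n + m - 1)) * jacobi_sum m n"
  proof -
    have "2 * m * n + m = (m * n + 1) + (m * n + m - 1)"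
      using assms by simp
    then have "?X ^ (2 * m * n + m) = ?X ^ (m * n + 1) * ?X ^ (m * n + m - 1)"
      by (metis power_add)
    then show ?thesis
      unfolding sum_int_interval_shift
      by (simp add: jacobi_sum_conv_wider_range algebra_simps)
  qed
  also have "\<dots> = (1 - ?X ^ (m * n + 1)) * (1 - ?X ^ (m * n + m - 1)) * jacobi_sum m n"
    by (simp add: algebra_simps)
  finally show ?thesis .
qed

lemma jacobi_sum_eq_jacobi_prod:
  assumes "0 < m"
  shows "jacobi_sum m n = jacobi_prod m n"
proof (induction n)
  case 0
  then show ?case
    by (simp add: jacobi_sum_def jacobi_prod_def jacobi_term_def gauss_binomial_int_def)
next
  case (Suc n)
  then show ?case
    by (simp add: jacobi_sum_Suc[OF assms] jacobi_prod_def algebra_simps)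
qed

definition polygonal_theta :: "nat \<Rightarrow> nat \<Rightarrow> 'a::comm_ring_1 fps" where
  "polygonal_theta m n = (\<Sum>k = - int n..int n. (-1) ^ nat \<bar>k\<bar> * fps_X ^ gen_polygonal m k)"

lemma fps_cutoff_q_pochhammer_jacobi_sum:
  assumes "2 \<le> m" and "2 * N \<le> n"
  shows "fps_cutoff (Suc N) (q_pochhammer (fps_X ^ m) n * jacobi_sum m n :: 'a::field fps)
           = fps_cutoff (Suc N) (polygonal_theta m n)"
  unfolding jacobi_sum_def polygonal_theta_def sum_distrib_left
proof (rule fps_cutoff_sum_cong)
  fix k
  let ?q = "fps_X ^ m :: 'a fps"
  let ?c = "(-1) ^ nat \<bar>k\<bar> * fps_X ^ gen_polygonal m k :: 'a fps"
  let ?G = "gauss_binomial_int ?q (int n + k) (int n - k)"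
  have factor: "q_pochhammer ?q n * jacobi_term m n k = ?c * (q_pochhammer ?q n * ?G)"
    by (simp add: jacobi_term_def ac_simps)
  show "fps_cutoff (Suc N) (q_pochhammer ?q n * jacobi_term m n k) = fps_cutoff (Suc N) ?c"
  proof (cases "\<bar>k\<bar> \<le> int N")
    case True
    have q0: "?q $ 0 = 0"
      using assms by simp
    have "?G = gauss_binomial ?q (nat (int n + k)) (nat (int n - k))"
      using True assms by (simp add: gauss_binomial_int_def abs_le_iff)
    then have "fps_cutoff (Suc N) (q_pochhammer ?q n * ?G)
        = fps_cutoff (Suc N) (q_pochhammer ?q N * gauss_binomial ?q (nat (int n + k)) (nat (int n - k)))"
      using assms by (intro fps_cutoff_mult_cong fps_cutoff_q_pochhammer[OF q0]) simp_all
    also have "\<dots> = fps_cutoff (Suc N) 1"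
      using True assms by (intro fps_cutoff_q_pochhammer_gauss_binomial[OF q0]) auto
    finally have "fps_cutoff (Suc N) (?c * (q_pochhammer ?q n * ?G)) = fps_cutoff (Suc N) (?c * 1)"
      by (rule fps_cutoff_mult_cong[OF refl])
    then show ?thesis
      unfolding factor by simp
  next
    case False
    then have "Suc N \<le> gen_polygonal m k"
      using abs_le_gen_polygonal[OF assms(1), of k] by linarith
    moreover have c: "?c = fps_X ^ gen_polygonal m k * (-1) ^ nat \<bar>k\<bar>"
      by (rule mult.commute)
    ultimately show ?thesis
      unfolding factor c mult.assoc by (simp only: fps_cutoff_X_power_mult)
  qed
qed

lemma polygonal_theta_nth:
  assumes "3 \<le> m" and "N \<le> n"
  shows "polygonal_theta m n $ N = (of_int (e_coef (m + 2) N) :: 'a::comm_ring_1)"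
proof -
  have nth: "polygonal_theta m n $ N
      = (\<Sum>k = - int n..int n. if gen_polygonal m k = N then (-1) ^ nat \<bar>k\<bar> else 0 :: 'a)"
    unfolding polygonal_theta_def fps_sum_nth
    by (intro sum.cong refl) (simp add: minus_one_power_nat_abs fps_X_power_nth)
  show ?thesis
  proof (cases "N \<in> range (gen_polygonal m)")
    case True
    then obtain k0 where k0: "N = gen_polygonal m k0"
      by blast
    have "\<bar>k0\<bar> \<le> int n"
      using abs_le_gen_polygonal[of m k0] k0 assms by simp
    moreover have "gen_polygonal m k = N \<longleftrightarrow> k = k0" for k
      using gen_polygonal_inj[OF assms(1)] k0 by blast
    moreover have "e_coef (m + 2) N = (-1) ^ nat \<bar>k0\<bar>"
      unfolding k0 by (rule e_coef_gen_polygonal[OF assms(1)])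
    ultimately show ?thesis
      unfolding nth by (simp add: abs_le_iff)
  next
    case False
    then have "gen_polygonal m k \<noteq> N" for k
      by auto
    then show ?thesis
      unfolding nth e_coef_not_gen_polygonal[OF assms(1) False] by simp
  qed
qed

section \<open>Divisors in the residue classes \<open>0\<close> and \<open>\<plusminus>1\<close>\<close>

definition residue_divisors :: "nat \<Rightarrow> nat \<Rightarrow> nat set" where
  "residue_divisors m n =
     (\<lambda>i. m * i + 1) ` {..<n} \<union> (\<lambda>i. m * i + m - 1) ` {..<n}
     \<union> (\<lambda>i. m * (i + 1)) ` {..<n}"

lemma mod_residues:
  fixes m i :: nat
  assumes "3 \<le> m"
  shows "(m * i + 1) mod m = 1" and "(m * i + m - 1) mod m = m - 1" and "(m * (i + 1)) mod m = 0"
proof -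
  have "m * i + 1 = 1 + i * m" and "m * i + m - 1 = (m - 1) + i * m"
    using assms by (simp_all add: mult.commute)
  then show "(m * i + 1) mod m = 1" and "(m * i + m - 1) mod m = m - 1"
    using assms by (simp_all only: mod_mult_self1) simp_all
qed simp

lemma finite_residue_divisors: "finite (residue_divisors m n)"
  by (simp add: residue_divisors_def)

lemma zero_notin_residue_divisors: "3 \<le> m \<Longrightarrow> 0 \<notin> residue_divisors m n"
  by (auto simp: residue_divisors_def)

lemma residue_divisors_dvd:
  assumes "3 \<le> m" and "0 < j" and "j < n"
  shows "{d \<in> residue_divisors m n. d dvd j}
           = {d. d dvd j \<and> (d mod m = 0 \<or> d mod m = 1 \<or> d mod m = m - 1)}"
proof (intro set_eqI iffI)
  fix d assume "d \<in> {d \<in> residue_divisors m n. d dvd j}"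
  then show "d \<in> {d. d dvd j \<and> (d mod m = 0 \<or> d mod m = 1 \<or> d mod m = m - 1)}"
    using mod_residues[OF assms(1)] by (auto simp: residue_divisors_def)
next
  fix d assume d: "d \<in> {d. d dvd j \<and> (d mod m = 0 \<or> d mod m = 1 \<or> d mod m = m - 1)}"
  have "0 < d" "d < n"
    using d assms(2,3) dvd_imp_le[of d j] by (auto intro: Nat.gr0I)
  define q where "q = d div m"
  have dq: "d = m * q + d mod m"
    unfolding q_def by simp
  have "q \<le> d"
    unfolding q_def by simp
  with \<open>d < n\<close> have "q < n"
    by linarith
  consider "d mod m = 0" | "d mod m = 1" | "d mod m = m - 1"
    using d by auto
  then have "d \<in> residue_divisors m n"
  proof cases
    case 1
    with dq \<open>0 < d\<close> have "d = m * ((q - 1) + 1)" and "q - 1 < n"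
      using \<open>q < n\<close> by (cases q; simp)+
    then show ?thesis unfolding residue_divisors_def by blast
  next
    case 2
    then show ?thesis
      using dq \<open>q < n\<close> unfolding residue_divisors_def by force
  next
    case 3
    then have "d = m * q + m - 1"
      using dq assms(1) by simp
    then show ?thesis
      using \<open>q < n\<close> unfolding residue_divisors_def by blast
  qed
  then show "d \<in> {d \<in> residue_divisors m n. d dvd j}"
    using d by simp
qed

lemma residue_classes_disjoint:
  fixes m :: nat
  assumes "3 \<le> m"
  shows "(\<lambda>i. m * i + 1) ` A \<inter> (\<lambda>i. m * i + m - 1) ` B = {}"
    and "((\<lambda>i. m * i + 1) ` A \<union> (\<lambda>i. m * i + m - 1) ` B) \<inter> (\<lambda>i. m * (i + 1)) ` C = {}"
proof -
  have one: "x mod m = 1" if "x \<in> (\<lambda>i. m * i + 1) ` A" for x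
    using that mod_residues(1)[OF assms] by auto
  have minus_one: "x mod m = m - 1" if "x \<in> (\<lambda>i. m * i + m - 1) ` B" for x
    using that mod_residues(2)[OF assms] by auto
  have zero: "x mod m = 0" if "x \<in> (\<lambda>i. m * (i + 1)) ` C" for x
    using that mod_residues(3)[OF assms] by auto
  show "(\<lambda>i. m * i + 1) ` A \<inter> (\<lambda>i. m * i + m - 1) ` B = {}"
    using one minus_one assms by fastforce
  show "((\<lambda>i. m * i + 1) ` A \<union> (\<lambda>i. m * i + m - 1) ` B) \<inter> (\<lambda>i. m * (i + 1)) ` C = {}"
    using one minus_one zero assms by fastforce
qed

lemma prod_residue_divisors:
  assumes "3 \<le> m"
  shows "(\<Prod>d\<in>residue_divisors m n. 1 - fps_X ^ d)
           = q_pochhammer (fps_X ^ m) n * (jacobi_prod m n :: 'a::idom fps)"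
proof -
  let ?X = "fps_X :: 'a fps"
  have "inj_on (\<lambda>i. m * i + 1) {..<n}" and "inj_on (\<lambda>i. m * (i + 1)) {..<n}"
    using assms by (auto intro!: inj_onI)
  moreover have "inj_on (\<lambda>i. m * i + m - 1) {..<n}"
  proof (rule inj_onI)
    fix x y assume "m * x + m - 1 = m * y + m - 1"
    moreover have "m * x + m - 1 = m * x + (m - 1)" and "m * y + m - 1 = m * y + (m - 1)"
      using assms by simp_all
    ultimately have "m * x = m * y"
      by simp
    then show "x = y"
      using assms by simp
  qed
  ultimately have "(\<Prod>d\<in>residue_divisors m n. 1 - ?X ^ d)
      = (\<Prod>i<n. 1 - ?X ^ (m * i + 1)) * (\<Prod>i<n. 1 - ?X ^ (m * i + m - 1))
        * (\<Prod>i<n. 1 - ?X ^ (m * (i + 1)))"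
    unfolding residue_divisors_def using residue_classes_disjoint[OF assms]
    by (simp add: prod.union_disjoint prod.reindex)
  also have "(\<Prod>i<n. 1 - ?X ^ (m * (i + 1))) = q_pochhammer (?X ^ m) n"
    unfolding q_pochhammer_def power_mult[symmetric] by simp
  also have "(\<Prod>i<n. 1 - ?X ^ (m * i + 1)) * (\<Prod>i<n. 1 - ?X ^ (m * i + m - 1))
      = jacobi_prod m n"
    unfolding jacobi_prod_def by (rule prod.distrib[symmetric])
  also have "jacobi_prod m n * q_pochhammer (?X ^ m) n = q_pochhammer (?X ^ m) n * jacobi_prod m n"
    by (rule mult.commute)
  finally show ?thesis .
qed

lemma fps_cutoff_prod_residue_divisors:
  assumes "3 \<le> m" and "2 * N \<le> n"
  shows "fps_cutoff (Suc N) (\<Prod>d\<in>residue_divisors m n. 1 - fps_X ^ d :: 'a::field fps)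
           = fps_cutoff (Suc N) (polygonal_theta m n)"
  using fps_cutoff_q_pochhammer_jacobi_sum[of m N n] assms
  by (simp add: prod_residue_divisors jacobi_sum_eq_jacobi_prod)

section \<open>Logarithmic derivatives\<close>

lemma X_deriv_prod:
  fixes f g :: "'b \<Rightarrow> 'a::comm_ring_1 fps"
  assumes "finite U" and "\<And>d. d \<in> U \<Longrightarrow> fps_X * fps_deriv (f d) = g d * f d"
  shows "fps_X * fps_deriv (prod f U) = sum g U * prod f U"
  using assms
proof (induction U rule: finite_induct)
  case (insert d U)
  have fd: "fps_X * fps_deriv (f d) = g d * f d"
    using insert.prems by simp
  have fU: "fps_X * fps_deriv (prod f U) = sum g U * prod f U"
    using insert by simp
  have "fps_X * fps_deriv (prod f (insert d U))
      = (fps_X * fps_deriv (f d)) * prod f U + f d * (fps_X * fps_deriv (prod f U))"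
    using insert.hyps by (simp add: algebra_simps)
  also have "\<dots> = sum g (insert d U) * prod f (insert d U)"
    unfolding fd fU using insert.hyps by (simp add: algebra_simps)
  finally show ?case .
qed simp

lemma X_deriv_exp_compose:
  fixes a :: "'a::field_char_0 fps"
  assumes "a $ 0 = 0"
  shows "fps_X * fps_deriv (fps_exp 1 oo a) = (fps_X * fps_deriv a) * (fps_exp 1 oo a)"
  using fps_compose_deriv[OF assms, of "fps_exp 1"] by (simp add: fps_exp_deriv ac_simps)

lemma fps_cutoff_unique_X_deriv_eq_mult:
  fixes f g s t :: "'a::field_char_0 fps"
  assumes "fps_X * fps_deriv f = s * f" and "fps_X * fps_deriv g = t * g"
    and "f $ 0 = g $ 0" and "s $ 0 = 0" and "t $ 0 = 0"
    and "fps_cutoff n s = fps_cutoff n t"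
  shows "fps_cutoff n f = fps_cutoff n g"
  unfolding fps_cutoff_eq_fps_cutoff_iff
proof (intro allI impI)
  fix i assume "i < n"
  then show "f $ i = g $ i"
  proof (induction i rule: less_induct)
    case (less i)
    show ?case
    proof (cases "i = 0")
      case False
      have "of_nat i * f $ i = (fps_X * fps_deriv f) $ i"
        using False by (simp add: fps_X_mult_nth)
      also have "\<dots> = (\<Sum>l = 0..i. s $ l * f $ (i - l))"
        unfolding assms(1) by (rule fps_mult_nth)
      also have "\<dots> = (\<Sum>l = 0..i. t $ l * g $ (i - l))"
      proof (rule sum.cong[OF refl])
        fix l assume "l \<in> {0..i}"
        then show "s $ l * f $ (i - l) = t $ l * g $ (i - l)"
          using less assms(4-6) by (cases "l = 0") (auto simp: fps_cutoff_eq_fps_cutoff_iff)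
      qed
      also have "\<dots> = (fps_X * fps_deriv g) $ i"
        unfolding assms(2) by (rule fps_mult_nth[symmetric])
      also have "\<dots> = of_nat i * g $ i"
        using False by (simp add: fps_X_mult_nth)
      finally show ?thesis
        using False by simp
    qed (use assms(3) in simp)
  qed
qed

definition multiples_series :: "nat \<Rightarrow> 'a::comm_ring_1 fps" where
  "multiples_series d = Abs_fps (\<lambda>j. if 0 < j \<and> d dvd j then of_nat d else 0)"

lemma multiples_series_mult:
  assumes "0 < d"
  shows "multiples_series d * (1 - fps_X ^ d) = of_nat d * fps_X ^ d"
proof (rule fps_ext)
  fix j
  have "d dvd j \<longleftrightarrow> d dvd (j - d)" if "d < j"
    using that by (metis dvd_add_triv_right_iff le_add_diff_inverse2 less_imp_le_nat)
  then show "(multiples_series d * (1 - fps_X ^ d)) $ j = (of_nat d * fps_X ^ d) $ j"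
    using assms
    by (auto simp: multiples_series_def algebra_simps fps_X_power_mult_nth fps_X_power_nth
        fps_of_nat dest: dvd_imp_le)
qed

lemma X_deriv_one_minus_X_power:
  assumes "0 < d"
  shows "fps_X * fps_deriv (1 - fps_X ^ d :: 'a::comm_ring_1 fps)
           = - multiples_series d * (1 - fps_X ^ d)"
proof -
  have "fps_X * fps_deriv (1 - fps_X ^ d :: 'a fps) = - (of_nat d * (fps_X * fps_X ^ (d - 1)))"
    by (simp add: fps_deriv_power fps_of_nat algebra_simps)
  also have "fps_X * fps_X ^ (d - 1) = (fps_X ^ d :: 'a fps)"
    using assms by (simp flip: power_Suc)
  finally show ?thesis
    by (simp add: multiples_series_mult[OF assms])
qed

lemma prod_one_minus_X_power_nth_0:
  "0 \<notin> U \<Longrightarrow> (\<Prod>d\<in>U. 1 - fps_X ^ d) $ 0 = (1 :: 'a::comm_ring_1)"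
  by (induction U rule: infinite_finite_induct) auto

definition divisor_series :: "nat set \<Rightarrow> 'a::comm_ring_1 fps" where
  "divisor_series U = (\<Sum>d\<in>U. multiples_series d)"

lemma divisor_series_nth:
  assumes "finite U"
  shows "divisor_series U $ j = (if j = 0 then 0 else of_nat (\<Sum>d | d \<in> U \<and> d dvd j. d))"
  using assms
  by (simp add: divisor_series_def multiples_series_def fps_sum_nth sum.inter_filter[symmetric])

lemma X_deriv_prod_one_minus_X_power:
  assumes "finite U" and "0 \<notin> U"
  shows "fps_X * fps_deriv (\<Prod>d\<in>U. 1 - fps_X ^ d)
           = - divisor_series U * (\<Prod>d\<in>U. 1 - fps_X ^ d :: 'a::comm_ring_1 fps)"
  unfolding divisor_series_def sum_negf[symmetric] using assms
  by (intro X_deriv_prod X_deriv_one_minus_X_power) (auto intro: Nat.gr0I)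

lemma divisor_series_residue_divisors_nth:
  assumes "3 \<le> m" and "0 < j" and "j < n"
  shows "divisor_series (residue_divisors m n) $ j = (of_nat (sigma' m j) :: 'a::comm_ring_1)"
  using residue_divisors_dvd[OF assms] assms(2)
  by (simp add: divisor_series_nth finite_residue_divisors sigma'_def)

definition sigma_log_series :: "nat \<Rightarrow> 'a::field_char_0 fps" where
  "sigma_log_series m = Abs_fps (\<lambda>j. if j = 0 then 0 else - of_nat (sigma' m j) / of_nat j)"

lemma bell_complete_conv_sigma_log_series:
  "bell_complete n (\<lambda>j. - (fact (j - 1) * real (sigma' m j)))
     = fact n * (fps_exp 1 oo sigma_log_series m) $ n"
proof -
  have "- (fact (j - 1) * real (sigma' m j)) / fact j = - real (sigma' m j) / real j" if "0 < j" for j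
    using that by (simp add: fact_reduce[of j] field_simps)
  then show ?thesis
    unfolding bell_complete_def sigma_log_series_def by (metis neq0_conv)
qed

lemma X_deriv_sigma_log_series_nth:
  "0 < j \<Longrightarrow> (fps_X * fps_deriv (sigma_log_series m)) $ j = - (of_nat (sigma' m j) :: 'a::field_char_0)"
  by (simp add: fps_X_mult_nth sigma_log_series_def)

lemma fps_cutoff_exp_sigma_log_series:
  assumes "3 \<le> m" and "N < n"
  shows "fps_cutoff (Suc N) (fps_exp 1 oo sigma_log_series m)
           = fps_cutoff (Suc N) (\<Prod>d\<in>residue_divisors m n. 1 - fps_X ^ d :: 'a::field_char_0 fps)"
proof -
  let ?A = "sigma_log_series m :: 'a fps" and ?U = "residue_divisors m n"
  have log_derivs: "fps_cutoff (Suc N) (fps_X * fps_deriv ?A) = fps_cutoff (Suc N) (- divisor_series ?U)"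
    unfolding fps_cutoff_eq_fps_cutoff_iff
  proof (intro allI impI)
    fix j assume "j < Suc N"
    show "(fps_X * fps_deriv ?A) $ j = (- divisor_series ?U) $ j"
    proof (cases "j = 0")
      case False
      have "divisor_series ?U $ j = (of_nat (sigma' m j) :: 'a)"
        using False \<open>j < Suc N\<close> assms by (intro divisor_series_residue_divisors_nth) auto
      moreover have "(fps_X * fps_deriv ?A) $ j = - of_nat (sigma' m j)"
        using False by (intro X_deriv_sigma_log_series_nth) simp
      ultimately show ?thesis
        by simp
    qed (simp add: divisor_series_nth finite_residue_divisors)
  qed
  have "fps_X * fps_deriv (fps_exp 1 oo ?A) = (fps_X * fps_deriv ?A) * (fps_exp 1 oo ?A)"
    by (rule X_deriv_exp_compose) (simp add: sigma_log_series_def)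
  moreover note X_deriv_prod_one_minus_X_power[OF finite_residue_divisors
      zero_notin_residue_divisors[OF assms(1)]]
  ultimately show ?thesis
    using zero_notin_residue_divisors[OF assms(1)]
    by (intro fps_cutoff_unique_X_deriv_eq_mult[OF _ _ _ _ _ log_derivs])
      (simp_all add: finite_residue_divisors prod_one_minus_X_power_nth_0 divisor_series_nth)
qed

theorem theorem3p1:
  fixes n m :: nat
  assumes "n \<ge> 1" and "m \<ge> 3"
  shows "bell_complete n (\<lambda>j. - (fact (j - 1) * real (sigma' m j)))
           = fact n * real_of_int (e_coef (m + 2) n)"
proof -
  define K where "K = 2 * n + 1"
  have "bell_complete n (\<lambda>j. - (fact (j - 1) * real (sigma' m j)))
      = fact n * (fps_exp 1 oo sigma_log_series m) $ n"
    by (rule bell_complete_conv_sigma_log_series)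
  also have "(fps_exp 1 oo sigma_log_series m) $ n
      = (\<Prod>d\<in>residue_divisors m K. 1 - fps_X ^ d :: real fps) $ n"
    using fps_cutoff_exp_sigma_log_series[OF assms(2), where N = n and n = K]
    by (auto simp: K_def fps_cutoff_eq_fps_cutoff_iff)
  also have "\<dots> = polygonal_theta m K $ n"
    using fps_cutoff_prod_residue_divisors[OF assms(2), where N = n and n = K]
    by (auto simp: K_def fps_cutoff_eq_fps_cutoff_iff)
  also have "\<dots> = real_of_int (e_coef (m + 2) n)"
    by (rule polygonal_theta_nth) (use assms(2) in \<open>simp_all add: K_def\<close>)
  finally show ?thesis .
qed

end
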